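(* Let $(\Omega,\rho)$ be a quasi-metric space, $X\subseteq\Omega$ a finite dataset, and let $W=(\Omega,X,\mathcal Q)$ be the quasi-metric similarity workload whose queries are the left balls $B_\varepsilon(\omega)=\{x\in\Omega:\rho(\omega,x)\le\varepsilon\}$, $\omega\in\Omega$, $\varepsilon>0$. Let $T$ be a finite rooted tree and $B_t\subseteq\Omega$, $t\in T$, subsets such that $X\subseteq\bigcup_{t\in L(T)}B_t\subseteq\Omega$ and, for every inner node $t$, $\bigcup_{s\in C_t}(B_s\cap X)\subseteq B_t$. For every node $t$ let $f_t\colon\Omega\to\mathbb R$ be a left 1-Lipschitz function such that $\omega\in B_t$ implies $f_t(\omega)\le 0$. For each inner node $t$ define $F_t(B_\varepsilon(\omega))=\{s\in C_t: f_s(\omega)\le\varepsilon\}$. Then $(T,\{B_t\}_{t\in L(T)},\{F_t\}_{t\in I(T)})$ is a consistent indexing scheme for $W$.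
   Context: A quasi-metric on $\Omega$ is a function $\rho\colon\Omega\times\Omega\to[0,\infty)$ with $\rho(x,y)=0\iff x=y$ and $\rho(x,z)\le\rho(x,y)+\rho(y,z)$, not necessarily symmetric. A function $f\colon\Omega\to\mathbb R$ is left 1-Lipschitz if $f(x)-f(y)\le\rho(x,y)$ for all $x,y\in\Omega$. A workload is a triple $W=(\Omega,X,\mathcal Q)$ where $X\subseteq\Omega$ is finite and $\mathcal Q\subseteq 2^\Omega$. For a rooted finite tree $T$, $L(T)$ is the set of leaves, $I(T)$ the set of inner nodes, $C_t$ the set of children of an inner node $t$. An indexing scheme on $W$ is a triple $(T,\mathcal B,\mathcal F)$ where $T$ is a rooted finite tree with root $\ast$, $\mathcal B=\{B_t\subseteq\Omega: t\in L(T)\}$, and $\mathcal F=\{F_t: t\in I(T)\}$ with $F_t\colon\mathcal Q\to 2^{C_t}$. Given $Q\in\mathcal Q$, the search algorithm sets $A_0=\{\ast\}$, $A_{i+1}=\bigcup_{t\in A_i\cap I(T)}F_t(Q)$, and outputs all $x\in X\cap Q$ with $x\in B_t$ for some leaf $t$ lying in some $A_i$. The scheme is consistent if for every $Q\in\mathcal Q$ the output equals $Q\cap X$. *)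

theory Defs
  imports Complex_Main
begin

(* Quasi-metric on the whole type 'a (the type plays the role of \<Omega>). *)
definition quasi_metric :: "('a \<Rightarrow> 'a \<Rightarrow> real) \<Rightarrow> bool" where
  "quasi_metric \<rho> \<longleftrightarrow>
     (\<forall>x y. \<rho> x y \<ge> 0) \<and> (\<forall>x y. \<rho> x y = 0 \<longleftrightarrow> x = y) \<and>
     (\<forall>x y z. \<rho> x z \<le> \<rho> x y + \<rho> y z)"

definition left_lipschitz1 :: "('a \<Rightarrow> 'a \<Rightarrow> real) \<Rightarrow> ('a \<Rightarrow> real) \<Rightarrow> bool" where
  "left_lipschitz1 \<rho> f \<longleftrightarrow> (\<forall>x y. f x - f y \<le> \<rho> x y)"

definition left_ball :: "('a \<Rightarrow> 'a \<Rightarrow> real) \<Rightarrow> 'a \<Rightarrow> real \<Rightarrow> 'a set" where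
  "left_ball \<rho> w \<epsilon> = {x. \<rho> w x \<le> \<epsilon>}"

definition ball_queries :: "('a \<Rightarrow> 'a \<Rightarrow> real) \<Rightarrow> 'a set set" where
  "ball_queries \<rho> = {left_ball \<rho> w \<epsilon> | w \<epsilon>. \<epsilon> > 0}"

(* Rooted finite tree: node set N, root r, parent map par (relevant on N - {r});
   every node reaches the root by iterating par. *)
definition rooted_tree :: "'n set \<Rightarrow> 'n \<Rightarrow> ('n \<Rightarrow> 'n) \<Rightarrow> bool" where
  "rooted_tree N r par \<longleftrightarrow> finite N \<and> r \<in> N \<and> (\<forall>t\<in>N - {r}. par t \<in> N) \<and>
     (\<forall>t\<in>N. \<exists>k. (par ^^ k) t = r)"

definition children :: "'n set \<Rightarrow> 'n \<Rightarrow> ('n \<Rightarrow> 'n) \<Rightarrow> 'n \<Rightarrow> 'n set" where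
  "children N r par t = {s \<in> N. s \<noteq> r \<and> par s = t}"

definition leaves :: "'n set \<Rightarrow> 'n \<Rightarrow> ('n \<Rightarrow> 'n) \<Rightarrow> 'n set" where
  "leaves N r par = {t \<in> N. children N r par t = {}}"

definition inner_nodes :: "'n set \<Rightarrow> 'n \<Rightarrow> ('n \<Rightarrow> 'n) \<Rightarrow> 'n set" where
  "inner_nodes N r par = {t \<in> N. children N r par t \<noteq> {}}"

primrec active :: "'n set \<Rightarrow> 'n \<Rightarrow> ('n \<Rightarrow> 'n) \<Rightarrow> ('n \<Rightarrow> 'a set \<Rightarrow> 'n set) \<Rightarrow> 'a set \<Rightarrow> nat \<Rightarrow> 'n set" where
  "active N r par F Q 0 = {r}"
| "active N r par F Q (Suc i) = (\<Union>t \<in> active N r par F Q i \<inter> inner_nodes N r par. F t Q)"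

definition search_output :: "'n set \<Rightarrow> 'n \<Rightarrow> ('n \<Rightarrow> 'n) \<Rightarrow> ('n \<Rightarrow> 'a set) \<Rightarrow>
    ('n \<Rightarrow> 'a set \<Rightarrow> 'n set) \<Rightarrow> 'a set \<Rightarrow> 'a set \<Rightarrow> 'a set" where
  "search_output N r par B F X Q =
     {x \<in> X \<inter> Q. \<exists>i. \<exists>t \<in> active N r par F Q i \<inter> leaves N r par. x \<in> B t}"

definition consistent_indexing_scheme :: "'n set \<Rightarrow> 'n \<Rightarrow> ('n \<Rightarrow> 'n) \<Rightarrow> ('n \<Rightarrow> 'a set) \<Rightarrow>
    ('n \<Rightarrow> 'a set \<Rightarrow> 'n set) \<Rightarrow> 'a set \<Rightarrow> 'a set set \<Rightarrow> bool" where
  "consistent_indexing_scheme N r par B F X Qs \<longleftrightarrow>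
     rooted_tree N r par \<and> finite X \<and>
     (\<forall>t \<in> inner_nodes N r par. \<forall>Q \<in> Qs. F t Q \<subseteq> children N r par t) \<and>
     (\<forall>Q \<in> Qs. search_output N r par B F X Q = Q \<inter> X)"

end

theory Submission
  imports Defs
begin

text \<open>Take a query \<open>B\<^sub>\<epsilon>(\<omega>)\<close> and a data point \<open>x\<close> in it, lying in \<open>B\<^sub>t\<close> for some leaf \<open>t\<close>. By
  nestedness \<open>x\<close> lies in \<open>B\<^sub>s\<close> for every ancestor \<open>s\<close> of \<open>t\<close>, so \<open>f\<^sub>s(x) \<le> 0\<close> and, by the left
  Lipschitz property, \<open>f\<^sub>s(\<omega>) \<le> f\<^sub>s(x) + \<rho>(\<omega>, x) \<le> \<epsilon>\<close>. Hence no node on the path from the root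
  to \<open>t\<close> is pruned, and the search reaches \<open>t\<close> and reports \<open>x\<close>.\<close>

lemma mem_children_par:
  assumes "s \<in> N" "s \<noteq> r"
  shows "s \<in> children N r par (par s)"
  using assms unfolding children_def by simp

lemma par_mem_inner_nodes:
  assumes "rooted_tree N r par" "s \<in> N" "s \<noteq> r"
  shows "par s \<in> inner_nodes N r par"
  using assms mem_children_par[of s N r par]
  unfolding rooted_tree_def inner_nodes_def by blast

lemma active_SucI:
  assumes "t \<in> active N r par F Q i" "t \<in> inner_nodes N r par" "s \<in> F t Q"
  shows "s \<in> active N r par F Q (Suc i)"
  using assms by auto

lemma ex_active_if_selected_upwards:
  assumes tree: "rooted_tree N r par" and "t \<in> N" "S t"
    and up: "\<And>s. s \<in> N \<Longrightarrow> s \<noteq> r \<Longrightarrow> S s \<Longrightarrow> s \<in> F (par s) Q \<and> S (par s)"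
  shows "\<exists>i. t \<in> active N r par F Q i"
proof -
  obtain k where "(par ^^ k) t = r"
    using tree \<open>t \<in> N\<close> unfolding rooted_tree_def by blast
  then show ?thesis
    using \<open>t \<in> N\<close> \<open>S t\<close>
  proof (induction k arbitrary: t)
    case 0
    then have "t \<in> active N r par F Q 0" by simp
    then show ?case ..
  next
    case (Suc k)
    show ?case
    proof (cases "t = r")
      case True
      then have "t \<in> active N r par F Q 0" by simp
      then show ?thesis ..
    next
      case False
      have "par t \<in> N"
        using tree Suc.prems(2) False unfolding rooted_tree_def by blast
      moreover have "t \<in> F (par t) Q" "S (par t)"
        using up Suc.prems(2,3) False by blast+
      moreover have "(par ^^ k) (par t) = r"
        using Suc.prems(1) by (simp add: funpow_Suc_right del: funpow.simps)
      ultimately obtain i where "par t \<in> active N r par F Q i"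
        using Suc.IH by blast
      then have "t \<in> active N r par F Q (Suc i)"
        using par_mem_inner_nodes[OF tree Suc.prems(2) False] \<open>t \<in> F (par t) Q\<close>
        by (rule active_SucI)
      then show ?thesis ..
    qed
  qed
qed

lemma left_lipschitz1_le_on_left_ball:
  assumes "left_lipschitz1 \<rho> g" "x \<in> left_ball \<rho> w \<epsilon>" "g x \<le> 0"
  shows "g w \<le> \<epsilon>"
proof -
  have "g w - g x \<le> \<rho> w x"
    using assms(1) unfolding left_lipschitz1_def by blast
  then show ?thesis
    using assms(2,3) unfolding left_ball_def by simp
qed

lemma search_output_left_ball:
  assumes tree: "rooted_tree N r par"
    and cover: "X \<subseteq> (\<Union>t \<in> leaves N r par. B t)"
    and nested: "\<forall>t \<in> inner_nodes N r par. (\<Union>s \<in> children N r par t. B s \<inter> X) \<subseteq> B t"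
    and lip: "\<forall>t \<in> N. left_lipschitz1 \<rho> (f t)"
    and neg: "\<forall>t \<in> N. \<forall>w \<in> B t. f t w \<le> 0"
    and Q: "Q = left_ball \<rho> w \<epsilon>"
    and F: "\<forall>t \<in> inner_nodes N r par. F t Q = {s \<in> children N r par t. f s w \<le> \<epsilon>}"
  shows "search_output N r par B F X Q = Q \<inter> X"
proof
  show "search_output N r par B F X Q \<subseteq> Q \<inter> X"
    unfolding search_output_def by blast
next
  show "Q \<inter> X \<subseteq> search_output N r par B F X Q"
  proof
    fix x assume x: "x \<in> Q \<inter> X"
    then obtain t where t: "t \<in> leaves N r par" "x \<in> B t"
      using cover by blast
    have up: "s \<in> F (par s) Q \<and> x \<in> B (par s)" if "s \<in> N" "s \<noteq> r" "x \<in> B s" for s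
    proof -
      have inner: "par s \<in> inner_nodes N r par"
        using par_mem_inner_nodes[OF tree that(1,2)] .
      have child: "s \<in> children N r par (par s)"
        using mem_children_par[OF that(1,2)] .
      have "f s w \<le> \<epsilon>"
        using left_lipschitz1_le_on_left_ball[of \<rho> "f s" x w \<epsilon>] lip neg that x Q by simp
      then have "s \<in> F (par s) Q"
        using F inner child by blast
      moreover have "x \<in> B (par s)"
        using nested inner child x that(3) by blast
      ultimately show ?thesis ..
    qed
    have "t \<in> N"
      using t(1) unfolding leaves_def by blast
    then obtain i where "t \<in> active N r par F Q i"
      using ex_active_if_selected_upwards[where S = "\<lambda>s. x \<in> B s" and F = F and Q = Q, OF tree \<open>t \<in> N\<close> t(2) up]
      by blast
    then show "x \<in> search_output N r par B F X Q"
      using x t unfolding search_output_def by blast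
  qed
qed

theorem theorem3p3:
  fixes \<rho> :: "'a \<Rightarrow> 'a \<Rightarrow> real"
    and X :: "'a set"
    and N :: "'n set" and r :: 'n and par :: "'n \<Rightarrow> 'n"
    and B :: "'n \<Rightarrow> 'a set"
    and f :: "'n \<Rightarrow> 'a \<Rightarrow> real"
    and rep :: "'a set \<Rightarrow> 'a \<times> real"
    and F :: "'n \<Rightarrow> 'a set \<Rightarrow> 'n set"
  assumes qm: "quasi_metric \<rho>"
    and finX: "finite X"
    and tree: "rooted_tree N r par"
    and cover: "X \<subseteq> (\<Union>t \<in> leaves N r par. B t)"
    and nested: "\<forall>t \<in> inner_nodes N r par.
                   (\<Union>s \<in> children N r par t. B s \<inter> X) \<subseteq> B t"
    and lip: "\<forall>t \<in> N. left_lipschitz1 \<rho> (f t)"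
    and neg: "\<forall>t \<in> N. \<forall>w \<in> B t. f t w \<le> 0"
    and rep: "\<forall>Q \<in> ball_queries \<rho>. snd (rep Q) > 0 \<and> Q = left_ball \<rho> (fst (rep Q)) (snd (rep Q))"
    and F_def: "\<forall>t \<in> inner_nodes N r par. \<forall>Q \<in> ball_queries \<rho>.
                  F t Q = {s \<in> children N r par t. f s (fst (rep Q)) \<le> snd (rep Q)}"
  shows "consistent_indexing_scheme N r par B F X (ball_queries \<rho>)"
proof -
  have "\<forall>t \<in> inner_nodes N r par. \<forall>Q \<in> ball_queries \<rho>. F t Q \<subseteq> children N r par t"
    using F_def by auto
  moreover have "\<forall>Q \<in> ball_queries \<rho>. search_output N r par B F X Q = Q \<inter> X"
  proof
    fix Q assume "Q \<in> ball_queries \<rho>"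
    then show "search_output N r par B F X Q = Q \<inter> X"
      using search_output_left_ball[OF tree cover nested lip neg, of Q "fst (rep Q)" "snd (rep Q)" F]
        rep F_def by simp
  qed
  ultimately show ?thesis
    unfolding consistent_indexing_scheme_def using tree finX by (intro conjI)
qed

end
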